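(* Let $\varepsilon>0$, $u_0\in\mathcal V_{[0,1]}\setminus\{\mathbf 0,\mathbf 1\}$, and let $\tau_n\downarrow0$ with $\tau_n<\varepsilon$ be such that for every $t\ge0$ the limit $\hat u(t):=\lim_{n\to\infty}u^{[\tau_n]}_{\lceil t/\tau_n\rceil}$ exists and $\hat u$ is (together with some $\gamma$) a solution of mass-conserving double-obstacle AC flow on $[0,\infty)$ with $\hat u(0)=u_0$. Then $\hat u\in C^{0,1}([0,\infty);\mathcal V)$, i.e. $\hat u$ is Lipschitz continuous on $[0,\infty)$.
   Context: $G=(V,E)$ is a finite, simple, connected, undirected graph with weights $\omega_{ij}=\omega_{ji}>0$ for $ij\in E$, $\omega_{ij}=0$ otherwise; $d_i=\sum_j\omega_{ij}$, $r\in[0,1]$ fixed. $\mathcal V$ = functions $V\to\mathbb R$ with $\langle u,v\rangle_{\mathcal V}=\sum_i u_iv_id_i^r$ and norm $\|\cdot\|_{\mathcal V}$; $\mathcal V_{[0,1]}$ = functions $V\to[0,1]$. $(\Delta u)_i=d_i^{-r}\sum_j\omega_{ij}(u_i-u_j)$, $e^{-\tau\Delta}$ its matrix exponential. $\mathbf 1$ all-ones, $\mathbf 0$ zero function; $\mathcal M(u)=\langle u,\mathbf 1\rangle_{\mathcal V}$; $\bar v=\mathcal M(v)/\mathcal M(\mathbf 1)$. For $u\in\mathcal V_{[0,1]}$, $\mathcal B(u)$ = set of $\beta\in\mathcal V$ with $\beta_i\ge0$ if $u_i=0$, $\beta_i=0$ if $0<u_i<1$, $\beta_i\le0$ if $u_i=1$.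 Semi-discrete iterates with time step $\tau$, $\lambda=\tau/\varepsilon$ and initial state $u_0$: $u^{[\tau]}_0=u_0$ and for $m\ge0$, some $\beta^{[\tau]}_{m+1}\in\mathcal B(u^{[\tau]}_{m+1})$ with $u^{[\tau]}_{m+1} -e^{-\tau\Delta}u^{[\tau]}_m-\lambda u^{[\tau]}_{m+1}+\lambda\overline{u^{[\tau]}_{m+1}}\mathbf{1} =\lambda\beta^{[\tau]}_{m+1} -\lambda\overline{\beta^{[\tau]}_{m+1}}\mathbf{1}$. A pair $(u,\beta)$ is a solution to mass-conserving double-obstacle AC flow on $[0,\infty)$ if $u\in H^1_{loc}\cap C^0$, $u(t)\in\mathcal V_{[0,1]}$, and for a.e. $t$: $\varepsilon \frac{du}{dt} + \varepsilon\Delta u-u+\bar u\mathbf{1} = \beta - \bar\beta\mathbf{1}$, $\beta(t)\in\mathcal B(u(t))$. *)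

theory Defs
  imports "HOL-Analysis.Analysis"
begin

definition weighted_graph :: "('n::finite \<Rightarrow> 'n \<Rightarrow> real) \<Rightarrow> bool" where
  "weighted_graph w \<longleftrightarrow>
     (\<forall>i j. w i j = w j i) \<and> (\<forall>i j. 0 \<le> w i j) \<and> (\<forall>i. w i i = 0) \<and>
     (\<forall>i j. (\<lambda>a b. 0 < w a b)\<^sup>*\<^sup>* i j)"

definition deg :: "('n::finite \<Rightarrow> 'n \<Rightarrow> real) \<Rightarrow> 'n \<Rightarrow> real" where
  "deg w i = (\<Sum>j\<in>UNIV. w i j)"

definition innerV :: "('n::finite \<Rightarrow> 'n \<Rightarrow> real) \<Rightarrow> real \<Rightarrow> real^'n \<Rightarrow> real^'n \<Rightarrow> real" where
  "innerV w r u v = (\<Sum>i\<in>UNIV. u$i * v$i * deg w i powr r)"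

definition normV :: "('n::finite \<Rightarrow> 'n \<Rightarrow> real) \<Rightarrow> real \<Rightarrow> real^'n \<Rightarrow> real" where
  "normV w r u = sqrt (innerV w r u u)"

definition mass :: "('n::finite \<Rightarrow> 'n \<Rightarrow> real) \<Rightarrow> real \<Rightarrow> real^'n \<Rightarrow> real" where
  "mass w r u = innerV w r u (\<chi> i. 1)"

definition avg :: "('n::finite \<Rightarrow> 'n \<Rightarrow> real) \<Rightarrow> real \<Rightarrow> real^'n \<Rightarrow> real" where
  "avg w r v = mass w r v / mass w r (\<chi> i. 1)"

definition V01 :: "(real^'n::finite) set" where
  "V01 = {u. \<forall>i. 0 \<le> u$i \<and> u$i \<le> 1}"

definition graph_laplacian :: "('n::finite \<Rightarrow> 'n \<Rightarrow> real) \<Rightarrow> real \<Rightarrow> real^'n \<Rightarrow> real^'n" where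
  "graph_laplacian w r u = (\<chi> i. (\<Sum>j\<in>UNIV. w i j * (u$i - u$j)) / deg w i powr r)"

definition heat :: "('n::finite \<Rightarrow> 'n \<Rightarrow> real) \<Rightarrow> real \<Rightarrow> real \<Rightarrow> real^'n \<Rightarrow> real^'n" where
  "heat w r \<tau> u = (\<Sum>k. ((- \<tau>) ^ k / fact k) *\<^sub>R ((graph_laplacian w r ^^ k) u))"

definition obstB :: "(real^'n::finite) \<Rightarrow> (real^'n) set" where
  "obstB u = {\<beta>. \<forall>i. (u$i = 0 \<longrightarrow> \<beta>$i \<ge> 0) \<and> (0 < u$i \<and> u$i < 1 \<longrightarrow> \<beta>$i = 0)
                     \<and> (u$i = 1 \<longrightarrow> \<beta>$i \<le> 0)}"

definition semi_discrete_iterates ::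
  "('n::finite \<Rightarrow> 'n \<Rightarrow> real) \<Rightarrow> real \<Rightarrow> real \<Rightarrow> real \<Rightarrow> real^'n \<Rightarrow> (nat \<Rightarrow> real^'n) \<Rightarrow> bool" where
  "semi_discrete_iterates w r \<epsilon> \<tau> u0 U \<longleftrightarrow>
     U 0 = u0 \<and>
     (\<forall>m. U (Suc m) \<in> V01 \<and>
        (\<exists>\<beta>\<in>obstB (U (Suc m)).
           U (Suc m) - heat w r \<tau> (U m) - (\<tau>/\<epsilon>) *\<^sub>R U (Suc m)
             + ((\<tau>/\<epsilon>) * avg w r (U (Suc m))) *\<^sub>R (\<chi> i. 1)
           = (\<tau>/\<epsilon>) *\<^sub>R \<beta> - ((\<tau>/\<epsilon>) * avg w r \<beta>) *\<^sub>R (\<chi> i. 1)))"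

text \<open>(u, beta) solves mass-conserving double-obstacle AC flow on [0,inf):
  u continuous, in H^1_loc (absolutely continuous with a locally square-integrable
  derivative u'), values in V01, and the equation holds for a.e. t \<ge> 0.\<close>
definition mc_ac_solution ::
  "('n::finite \<Rightarrow> 'n \<Rightarrow> real) \<Rightarrow> real \<Rightarrow> real \<Rightarrow> (real \<Rightarrow> real^'n) \<Rightarrow> (real \<Rightarrow> real^'n) \<Rightarrow> bool" where
  "mc_ac_solution w r \<epsilon> u \<beta> \<longleftrightarrow>
     continuous_on {0..} u \<and> (\<forall>t\<ge>0. u t \<in> V01) \<and>
     (\<exists>u'. (\<forall>T\<ge>0. set_integrable lborel {0..T} u' \<and>
                   set_integrable lborel {0..T} (\<lambda>t. (norm (u' t))\<^sup>2)) \<and>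
           (\<forall>t\<ge>0. u t = u 0 + set_lebesgue_integral lborel {0..t} u') \<and>
           (AE t in lborel. t \<ge> 0 \<longrightarrow>
               \<epsilon> *\<^sub>R u' t + \<epsilon> *\<^sub>R graph_laplacian w r (u t) - u t + avg w r (u t) *\<^sub>R (\<chi> i. 1)
                 = \<beta> t - avg w r (\<beta> t) *\<^sub>R (\<chi> i. 1)
               \<and> \<beta> t \<in> obstB (u t)))"

end

theory Submission
  imports Defs
begin

(*
  A solution u of the mass-conserving double-obstacle flow is Lipschitz because its velocity u'
  is essentially bounded. Where a component u_i sits on an obstacle (0 or 1) it is at an extremum
  of an absolutely continuous function, so by Lebesgue differentiation u'_i = 0 there for a.e. t.
  At the free vertices the obstacle multiplier vanishes, so eps u'_i is given by bounded terms
  (Delta u, u, the mean of u) minus the mean of the multiplier. Since u' has zero mass and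
  vanishes on the obstacles, that mean is a weighted average of the bounded terms over the free
  vertices, hence bounded too.
*)

section \<open>Difference quotients of indefinite integrals\<close>

lemma AE_not_in_negligible: "negligible N \<Longrightarrow> AE t in lborel. t \<notin> N"
  by (metis AE_completion_iff AE_not_in negligible_iff_null_sets)

lemma integral_right_quotients_tendsto:
  fixes G :: "real \<Rightarrow> real"
  assumes "\<And>a b. G integrable_on {a..b}"
  obtains N where "negligible N"
    and "\<And>t. t \<notin> N \<Longrightarrow> ((\<lambda>\<delta>. integral {t..t + \<delta>} G / \<delta>) \<longlongrightarrow> G t) (at_right 0)"
proof -
  have "\<And>a b. G integrable_on cbox a b"
    using assms by simp
  then obtain N where "negligible N"
    and lim: "\<And>t e. t \<notin> N \<Longrightarrow> 0 < e \<Longrightarrow> \<exists>d>0. \<forall>h. 0 < h \<and> h < d \<longrightarrow>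
               norm (integral (cbox t (t + h *\<^sub>R One)) G /\<^sub>R h ^ DIM(real) - G t) < e"
    by (rule integrable_ccontinuous_explicit) (rule that, assumption+)
  have "((\<lambda>\<delta>. integral {t..t + \<delta>} G / \<delta>) \<longlongrightarrow> G t) (at_right 0)" if "t \<notin> N" for t
    unfolding tendsto_iff eventually_at_right_field dist_real_def
  proof (intro allI impI)
    fix e :: real assume "0 < e"
    then obtain d where "d > 0" and "\<forall>h. 0 < h \<and> h < d \<longrightarrow>
               norm (integral (cbox t (t + h *\<^sub>R One)) G /\<^sub>R h ^ DIM(real) - G t) < e"
      using lim[OF \<open>t \<notin> N\<close> \<open>0 < e\<close>] by blast
    then have "\<forall>h. 0 < h \<and> h < d \<longrightarrow> \<bar>integral {t..t + h} G / h - G t\<bar> < e"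
      by (simp add: divide_inverse_commute)
    with \<open>d > 0\<close> show "\<exists>b>0. \<forall>h>0. h < b \<longrightarrow> \<bar>integral {t..t + h} G / h - G t\<bar> < e"
      by blast
  qed
  with \<open>negligible N\<close> show ?thesis
    by (rule that)
qed

lemma AE_integral_difference_quotients_tendsto:
  fixes G :: "real \<Rightarrow> real"
  assumes "\<And>a b. G integrable_on {a..b}"
  shows "AE t in lborel. ((\<lambda>\<delta>. integral {t..t + \<delta>} G / \<delta>) \<longlongrightarrow> G t) (at_right 0) \<and>
                         ((\<lambda>\<delta>. integral {t - \<delta>..t} G / \<delta>) \<longlongrightarrow> G t) (at_right 0)"
proof -
  obtain N1 where "negligible N1"
    and right: "\<And>t. t \<notin> N1 \<Longrightarrow> ((\<lambda>\<delta>. integral {t..t + \<delta>} G / \<delta>) \<longlongrightarrow> G t) (at_right 0)"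
    using integral_right_quotients_tendsto[OF assms] by blast
  \<comment> \<open>Left quotients of G are right quotients of its reflection.\<close>
  have "(\<lambda>x. G (- x)) integrable_on {a..b}" for a b
    using Henstock_Kurzweil_Integration.integrable_reflect_real[where f=G and a="- b" and b="- a"] assms
    by simp
  then obtain N2 where "negligible N2"
    and reflected: "\<And>t. t \<notin> N2 \<Longrightarrow>
          ((\<lambda>\<delta>. integral {t..t + \<delta>} (\<lambda>x. G (- x)) / \<delta>) \<longlongrightarrow> G (- t)) (at_right 0)"
    by (rule integral_right_quotients_tendsto) (rule that, assumption+)
  have "negligible (uminus ` N2)"
    using \<open>negligible N2\<close>
    by (intro negligible_differentiable_image_negligible linear_imp_differentiable_on linear_uminus)
      simp_all
  with \<open>negligible N1\<close> have "AE t in lborel. t \<notin> N1 \<union> uminus ` N2"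
    by (intro AE_not_in_negligible negligible_Un)
  then have "AE t in lborel. t \<notin> N1 \<and> - t \<notin> N2"
    by (rule eventually_mono) force
  then show ?thesis
  proof eventually_elim
    case (elim t)
    have "((\<lambda>\<delta>. integral {t - \<delta>..t} G / \<delta>) \<longlongrightarrow> G t) (at_right 0)"
      using reflected[of "- t"] elim
        Henstock_Kurzweil_Integration.integral_reflect_real[where f=G and a="t - _" and b=t]
      by simp
    with right elim show ?case by blast
  qed
qed

lemma AE_derivative_eq_0_at_minimum:
  fixes h G :: "real \<Rightarrow> real"
  assumes G: "\<And>b. G integrable_on {a..b}"
    and hG: "\<And>x y. a \<le> x \<Longrightarrow> x \<le> y \<Longrightarrow> h y - h x = integral {x..y} G"
    and min: "\<And>t. a \<le> t \<Longrightarrow> c \<le> h t"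
  shows "AE t in lborel. a < t \<longrightarrow> h t = c \<longrightarrow> G t = 0"
proof -
  define G0 where "G0 = (\<lambda>t. if t \<in> {a..} then G t else 0)"
  have "G0 integrable_on {x..y}" for x y
  proof -
    have "G integrable_on {max a x..y}"
      using G by (rule integrable_on_subinterval) auto
    moreover have "{a..} \<inter> {x..y} = {max a x..y}"
      by auto
    ultimately show ?thesis
      unfolding G0_def integrable_restrict_Int by simp
  qed
  then have "AE t in lborel. ((\<lambda>\<delta>. integral {t..t + \<delta>} G0 / \<delta>) \<longlongrightarrow> G0 t) (at_right 0) \<and>
                             ((\<lambda>\<delta>. integral {t - \<delta>..t} G0 / \<delta>) \<longlongrightarrow> G0 t) (at_right 0)"
    by (rule AE_integral_difference_quotients_tendsto)
  then show ?thesis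
  proof eventually_elim
    case (elim t)
    show ?case
    proof (intro impI)
      assume "a < t" and "h t = c"
      have G0_eq: "integral {x..y} G0 = h y - h x" if "a \<le> x" "x \<le> y" for x y
      proof -
        have "integral {x..y} G0 = integral {x..y} G"
          using that by (intro integral_cong) (auto simp: G0_def)
        then show ?thesis
          using hG[OF that] by simp
      qed
      have "eventually (\<lambda>\<delta>. 0 \<le> integral {t..t + \<delta>} G0 / \<delta>) (at_right 0)"
        unfolding eventually_at_right_field
        using \<open>a < t\<close> \<open>h t = c\<close> min by (intro exI[of _ 1]) (auto simp: G0_eq)
      with elim have "0 \<le> G0 t"
        by (intro tendsto_lowerbound) auto
      moreover have "eventually (\<lambda>\<delta>. integral {t - \<delta>..t} G0 / \<delta> \<le> 0) (at_right 0)"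
        unfolding eventually_at_right_field
        using \<open>a < t\<close> \<open>h t = c\<close> min
        by (intro exI[of _ "t - a"]) (auto simp: G0_eq divide_nonpos_pos)
      with elim have "G0 t \<le> 0"
        by (intro tendsto_upperbound) auto
      ultimately show "G t = 0"
        using \<open>a < t\<close> by (simp add: G0_def)
    qed
  qed
qed

lemma abs_diff_le_of_AE_bounded_derivative:
  fixes h G :: "real \<Rightarrow> real"
  assumes integrable: "\<And>T. set_integrable lborel {0..T} G"
    and rep: "\<And>s t. 0 \<le> s \<Longrightarrow> s \<le> t \<Longrightarrow> h t - h s = integral {s..t} G"
    and bound: "AE x in lborel. 0 < x \<longrightarrow> \<bar>G x\<bar> \<le> C"
    and "0 \<le> s" "0 \<le> t"
  shows "\<bar>h t - h s\<bar> \<le> C * \<bar>t - s\<bar>"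
proof -
  have ordered: "\<bar>h t - h s\<bar> \<le> C * (t - s)" if "0 \<le> s" "s \<le> t" for s t
  proof -
    have G: "set_integrable lborel {s..t} G"
      by (rule set_integrable_subset[OF integrable[of t]]) (use that in auto)
    have "\<bar>h t - h s\<bar> = norm (LINT x:{s..t}|lborel. G x)"
      using rep[OF that] set_borel_integral_eq_integral(2)[OF G] by simp
    also have "\<dots> \<le> (LINT x:{s..t}|lborel. norm (G x))"
      by (rule set_integral_norm_bound[OF G])
    also have "\<dots> \<le> (LINT x:{s..t}|lborel. C)"
    proof (rule set_integral_mono_AE)
      show "set_integrable lborel {s..t} (\<lambda>x. norm (G x))"
        by (rule set_integrable_norm[OF G])
      show "set_integrable lborel {s..t} (\<lambda>x. C)"
        by (simp add: set_integrable_def integrable_indicator_iff emeasure_lborel_Icc_eq)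
      show "AE x\<in>{s..t} in lborel. norm (G x) \<le> C"
        using bound AE_lborel_singleton[of 0] by eventually_elim (use that in auto)
    qed
    also have "\<dots> = C * (t - s)"
      using that by (simp add: set_integral_const)
    finally show ?thesis .
  qed
  show ?thesis
  proof (cases "s \<le> t")
    case True
    then show ?thesis
      using ordered[OF \<open>0 \<le> s\<close>] by simp
  next
    case False
    then show ?thesis
      using ordered[OF \<open>0 \<le> t\<close>, of s] by (simp add: abs_minus_commute)
  qed
qed

lemma indefinite_integral_components:
  fixes u u' :: "real \<Rightarrow> real^'n::finite"
  assumes integrable: "\<forall>T\<ge>0. set_integrable lborel {0..T} u'"
    and rep: "\<forall>t\<ge>0. u t = u 0 + (LINT x:{0..t}|lborel. u' x)"
  shows "set_integrable lborel {0..T} (\<lambda>t. u' t $ i)"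
    and "0 \<le> s \<Longrightarrow> s \<le> t \<Longrightarrow> u t $ i - u s $ i = integral {s..t} (\<lambda>x. u' x $ i)"
proof -
  show component_integrable: "set_integrable lborel {0..T} (\<lambda>t. u' t $ i)" for T
  proof (cases "T \<ge> 0")
    case True
    then have "integrable lborel (\<lambda>t. (indicator {0..T} t *\<^sub>R u' t) $ i)"
      using integrable unfolding set_integrable_def
      by (intro integrable_bounded_linear[where T="\<lambda>x. x $ i"]) auto
    then show ?thesis
      by (simp add: set_integrable_def)
  next
    case False
    then have "{0..T} = {}"
      by auto
    then show ?thesis
      by (simp add: set_integrable_def)
  qed
  have rep_integral: "u t $ i = u 0 $ i + integral {0..t} (\<lambda>x. u' x $ i)" if "t \<ge> 0" for t
  proof -
    have "set_integrable lborel {0..t} u'"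
      using integrable that by simp
    then have "u' integrable_on {0..t}" and "(LINT x:{0..t}|lborel. u' x) = integral {0..t} u'"
      by (simp_all add: set_borel_integral_eq_integral)
    moreover have "u t = u 0 + (LINT x:{0..t}|lborel. u' x)"
      using rep that by blast
    ultimately show ?thesis
      by simp
  qed
  assume "0 \<le> s" "s \<le> t"
  have "integral {0..s} (\<lambda>x. u' x $ i) + integral {s..t} (\<lambda>x. u' x $ i) = integral {0..t} (\<lambda>x. u' x $ i)"
    using \<open>0 \<le> s\<close> \<open>s \<le> t\<close> set_borel_integral_eq_integral(1)[OF component_integrable]
    by (intro Henstock_Kurzweil_Integration.integral_combine) auto
  then show "u t $ i - u s $ i = integral {s..t} (\<lambda>x. u' x $ i)"
    using rep_integral[of s] rep_integral[of t] \<open>0 \<le> s\<close> \<open>s \<le> t\<close> by simp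
qed

section \<open>Mass and the graph Laplacian\<close>

lemma mass_eq_sum: "mass w r x = (\<Sum>j\<in>UNIV. x $ j * deg w j powr r)"
  by (simp add: mass_def innerV_def)

lemma linear_mass: "linear (mass w r)"
  by (rule linearI) (simp_all add: mass_eq_sum sum.distrib sum_distrib_left algebra_simps)

lemma mass_diff_avg: "mass w r (x - avg w r x *\<^sub>R (\<chi> i. 1)) = 0"
proof (cases "mass w r (\<chi> i. 1) = 0")
  case True
  then have "deg w j powr r = 0" for j
    by (simp add: mass_eq_sum sum_nonneg_eq_0_iff)
  then show ?thesis
    by (simp add: mass_eq_sum)
next
  case False
  then show ?thesis
    by (simp add: linear_diff[OF linear_mass] linear_cmul[OF linear_mass] avg_def)
qed

lemma avg_bounds:
  assumes "u \<in> V01"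
  shows "0 \<le> avg w r u" and "avg w r u \<le> 1"
proof -
  have "0 \<le> mass w r u" and "mass w r u \<le> mass w r (\<chi> i. 1)"
    using assms by (auto simp: mass_eq_sum V01_def intro!: sum_nonneg sum_mono mult_left_le_one_le)
  then show "0 \<le> avg w r u" and "avg w r u \<le> 1"
    by (auto simp: avg_def divide_le_eq_1)
qed

lemma mass_graph_laplacian:
  fixes w :: "'n::finite \<Rightarrow> 'n \<Rightarrow> real"
  assumes nonneg: "\<And>i j. 0 \<le> w i j" and sym: "\<And>i j. w i j = w j i"
  shows "mass w r (graph_laplacian w r u) = 0"
proof -
  have "graph_laplacian w r u $ j * deg w j powr r = (\<Sum>k\<in>UNIV. w j k * (u $ j - u $ k))" for j
  proof (cases "deg w j = 0")
    case True
    then have "w j k = 0" for k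
      using nonneg by (simp add: deg_def sum_nonneg_eq_0_iff)
    then show ?thesis
      by (simp add: True)
  qed (simp add: graph_laplacian_def)
  then have "mass w r (graph_laplacian w r u) = (\<Sum>j\<in>UNIV. \<Sum>k\<in>UNIV. w j k * (u $ j - u $ k))"
    by (simp add: mass_eq_sum)
  also have "\<dots> = (\<Sum>j\<in>UNIV. \<Sum>k\<in>UNIV. w j k * u $ j) - (\<Sum>j\<in>UNIV. \<Sum>k\<in>UNIV. w j k * u $ k)"
    by (simp add: right_diff_distrib sum_subtractf)
  also have "(\<Sum>j\<in>UNIV. \<Sum>k\<in>UNIV. w j k * u $ k) = (\<Sum>j\<in>UNIV. \<Sum>k\<in>UNIV. w j k * u $ j)"
    by (subst sum.swap) (simp add: sym)
  finally show ?thesis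
    by simp
qed

lemma abs_graph_laplacian_le:
  fixes w :: "'n::finite \<Rightarrow> 'n \<Rightarrow> real"
  assumes nonneg: "\<And>i j. 0 \<le> w i j" and "u \<in> V01"
  shows "\<bar>graph_laplacian w r u $ j\<bar> \<le> deg w j / deg w j powr r"
proof -
  have "\<bar>\<Sum>k\<in>UNIV. w j k * (u $ j - u $ k)\<bar> \<le> (\<Sum>k\<in>UNIV. w j k * \<bar>u $ j - u $ k\<bar>)"
    using nonneg by (intro order_trans[OF sum_abs] sum_mono) (simp add: abs_mult)
  also have "\<dots> \<le> deg w j"
  proof -
    have u01: "0 \<le> u $ k" "u $ k \<le> 1" for k
      using \<open>u \<in> V01\<close> by (auto simp: V01_def)
    have "\<bar>u $ j - u $ k\<bar> \<le> 1" for k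
      using u01[of j] u01[of k] by (auto simp: abs_le_iff)
    then show ?thesis
      unfolding deg_def using nonneg by (intro sum_mono mult_right_le_one_le) auto
  qed
  finally show ?thesis
    by (simp add: graph_laplacian_def abs_div_pos divide_right_mono)
qed

lemma abs_le_of_weighted_mean:
  fixes p F :: "'a \<Rightarrow> real"
  assumes "finite Q" and "\<And>j. j \<in> Q \<Longrightarrow> 0 \<le> p j" and "\<And>j. j \<in> Q \<Longrightarrow> \<bar>F j\<bar> \<le> K"
    and "0 < sum p Q" and "(\<Sum>j\<in>Q. p j * (F j - b)) = 0"
  shows "\<bar>b\<bar> \<le> K"
proof -
  have "b * sum p Q = (\<Sum>j\<in>Q. p j * F j)"
    using assms(5) by (simp add: algebra_simps sum_subtractf sum_distrib_left)
  then have "\<bar>b\<bar> * sum p Q = \<bar>\<Sum>j\<in>Q. p j * F j\<bar>"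
    using assms(4) by (metis abs_mult abs_of_pos)
  also have "\<dots> \<le> (\<Sum>j\<in>Q. p j * K)"
    using assms(2,3) by (intro order_trans[OF sum_abs] sum_mono) (simp add: abs_mult mult_left_mono)
  also have "\<dots> = K * sum p Q"
    by (simp add: sum_distrib_left mult.commute)
  finally show ?thesis
    using assms(4) by simp
qed

lemma normV_le:
  fixes w :: "'n::finite \<Rightarrow> 'n \<Rightarrow> real"
  assumes nonneg: "\<And>i j. 0 \<le> w i j" and bound: "\<And>i. 0 < deg w i \<Longrightarrow> \<bar>x $ i\<bar> \<le> c"
  shows "normV w r x \<le> c * sqrt (mass w r (\<chi> i. 1))"
proof (cases "mass w r (\<chi> i. 1) = 0")
  case True
  then have "deg w j powr r = 0" for j
    by (simp add: mass_eq_sum sum_nonneg_eq_0_iff)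
  then show ?thesis
    by (simp add: True normV_def innerV_def)
next
  case False
  then obtain i where "deg w i powr r \<noteq> 0"
    unfolding mass_eq_sum by (metis (no_types, lifting) mult_1 sum.neutral vec_lambda_beta)
  moreover have deg_nonneg: "0 \<le> deg w j" for j
    unfolding deg_def using nonneg by (simp add: sum_nonneg)
  ultimately have "0 \<le> c"
    using bound[of i] by (simp add: order_less_le)
  have "x $ j * x $ j * deg w j powr r \<le> c\<^sup>2 * deg w j powr r" for j
  proof (cases "deg w j = 0")
    case False
    with deg_nonneg have "\<bar>x $ j\<bar> \<le> c"
      by (intro bound) (simp add: order_less_le)
    then have "x $ j * x $ j \<le> c\<^sup>2"
      by (metis abs_ge_zero abs_mult_self_eq power2_eq_square power_mono)
    then show ?thesis
      by (simp add: mult_right_mono)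
  qed simp
  then have "innerV w r x x \<le> c\<^sup>2 * mass w r (\<chi> i. 1)"
    by (simp add: innerV_def mass_eq_sum sum_distrib_left sum_mono)
  then have "normV w r x \<le> sqrt (c\<^sup>2 * mass w r (\<chi> i. 1))"
    unfolding normV_def by (rule real_sqrt_le_mono)
  also have "\<dots> = c * sqrt (mass w r (\<chi> i. 1))"
    using \<open>0 \<le> c\<close> by (simp add: real_sqrt_mult)
  finally show ?thesis .
qed

section \<open>Bounded velocity of solutions\<close>

definition velocity_bound :: "('n::finite \<Rightarrow> 'n \<Rightarrow> real) \<Rightarrow> real \<Rightarrow> real \<Rightarrow> real" where
  "velocity_bound w r \<epsilon> = 2 * (1 / \<epsilon> + (\<Sum>j\<in>UNIV. deg w j / deg w j powr r))"

lemma abs_velocity_le: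
  fixes w :: "'n::finite \<Rightarrow> 'n \<Rightarrow> real" and u v \<beta> :: "real^'n"
  assumes nonneg: "\<And>i j. 0 \<le> w i j" and sym: "\<And>i j. w i j = w j i" and "0 < \<epsilon>"
    and u: "u \<in> V01" and \<beta>: "\<beta> \<in> obstB u"
    and eq: "\<epsilon> *\<^sub>R v + \<epsilon> *\<^sub>R graph_laplacian w r u - u + avg w r u *\<^sub>R (\<chi> i. 1)
             = \<beta> - avg w r \<beta> *\<^sub>R (\<chi> i. 1)"
    and v_obstacle: "\<And>j. u $ j = 0 \<or> u $ j = 1 \<Longrightarrow> v $ j = 0"
    and "0 < deg w i"
  shows "\<bar>v $ i\<bar> \<le> velocity_bound w r \<epsilon>"
proof -
  define D where "D = (\<Sum>j\<in>UNIV. deg w j / deg w j powr r)"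
  define F where "F j = u $ j - avg w r u - \<epsilon> * graph_laplacian w r u $ j" for j
  define Q where "Q = {j. 0 < u $ j \<and> u $ j < 1}"
  have u01: "0 \<le> u $ j" "u $ j \<le> 1" for j
    using u by (auto simp: V01_def)
  have F_bound: "\<bar>F j\<bar> \<le> 1 + \<epsilon> * D" for j
  proof -
    have "0 \<le> deg w k" for k
      unfolding deg_def using nonneg by (simp add: sum_nonneg)
    then have "deg w j / deg w j powr r \<le> D"
      unfolding D_def by (intro member_le_sum) auto
    then have "\<bar>graph_laplacian w r u $ j\<bar> \<le> D"
      by (rule order_trans[OF abs_graph_laplacian_le[OF nonneg u]])
    then have "\<bar>\<epsilon> * graph_laplacian w r u $ j\<bar> \<le> \<epsilon> * D"
      using \<open>0 < \<epsilon>\<close> by (simp add: abs_mult)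
    moreover have "\<bar>u $ j - avg w r u\<bar> \<le> 1"
      using u01[of j] avg_bounds[OF u, of w r] by (auto simp: abs_le_iff)
    ultimately show ?thesis
      unfolding F_def by linarith
  qed
  have v_Q: "\<epsilon> * v $ j = F j - avg w r \<beta>" if "j \<in> Q" for j
  proof -
    have "\<beta> $ j = 0"
      using \<beta> that by (auto simp: obstB_def Q_def)
    then show ?thesis
      using arg_cong[OF eq, of "\<lambda>x. x $ j"] by (simp add: F_def algebra_simps)
  qed
  have v_not_Q: "v $ j = 0" if "j \<notin> Q" for j
  proof (rule v_obstacle)
    show "u $ j = 0 \<or> u $ j = 1"
      using u01[of j] that by (auto simp: Q_def)
  qed
  \<comment> \<open>v has zero mass and vanishes off the free set Q, which makes the mean of \<beta> a
    weighted mean of the F j over Q.\<close>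
  have "\<epsilon> *\<^sub>R v = (\<beta> - avg w r \<beta> *\<^sub>R (\<chi> i. 1)) + (u - avg w r u *\<^sub>R (\<chi> i. 1))
                   - \<epsilon> *\<^sub>R graph_laplacian w r u"
    using eq by (simp add: algebra_simps)
  then have "mass w r (\<epsilon> *\<^sub>R v) = mass w r (\<beta> - avg w r \<beta> *\<^sub>R (\<chi> i. 1))
      + mass w r (u - avg w r u *\<^sub>R (\<chi> i. 1)) - \<epsilon> * mass w r (graph_laplacian w r u)"
    by (simp only: linear_add[OF linear_mass] linear_diff[OF linear_mass] linear_cmul[OF linear_mass] real_scaleR_def)
  then have "\<epsilon> * mass w r v = 0"
    by (simp add: linear_cmul[OF linear_mass] mass_diff_avg mass_graph_laplacian[OF nonneg sym])
  then have "(\<Sum>j\<in>UNIV. deg w j powr r * v $ j) = 0"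
    using \<open>0 < \<epsilon>\<close> by (simp add: mass_eq_sum mult.commute)
  then have "(\<Sum>j\<in>Q. deg w j powr r * v $ j) = 0"
    using v_not_Q by (simp add: sum.mono_neutral_left[of UNIV Q])
  moreover have "(\<Sum>j\<in>Q. deg w j powr r * (F j - avg w r \<beta>))
      = \<epsilon> * (\<Sum>j\<in>Q. deg w j powr r * v $ j)"
    unfolding sum_distrib_left by (rule sum.cong) (simp_all add: v_Q[symmetric])
  ultimately have weighted: "(\<Sum>j\<in>Q. deg w j powr r * (F j - avg w r \<beta>)) = 0"
    by simp
  show ?thesis
  proof (cases "i \<in> Q")
    case True
    have "0 < deg w i powr r"
      using \<open>0 < deg w i\<close> by simp
    also have "\<dots> \<le> sum (\<lambda>j. deg w j powr r) Q"
      using True by (intro member_le_sum) auto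
    finally have "\<bar>avg w r \<beta>\<bar> \<le> 1 + \<epsilon> * D"
      by (intro abs_le_of_weighted_mean[OF _ _ _ _ weighted] F_bound) auto
    then have "\<epsilon> * \<bar>v $ i\<bar> \<le> 2 * (1 + \<epsilon> * D)"
      using F_bound[of i] v_Q[OF True] \<open>0 < \<epsilon>\<close> by (simp add: abs_mult[symmetric])
    then show ?thesis
      using \<open>0 < \<epsilon>\<close> by (simp add: velocity_bound_def D_def field_simps)
  next
    case False
    have "0 \<le> D"
      unfolding D_def deg_def using nonneg by (intro sum_nonneg divide_nonneg_nonneg) (auto intro: sum_nonneg)
    with False v_not_Q \<open>0 < \<epsilon>\<close> show ?thesis
      by (simp add: velocity_bound_def D_def[symmetric])
  qed
qed

lemma mc_ac_solution_velocity_bounded: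
  fixes w :: "'n::finite \<Rightarrow> 'n \<Rightarrow> real"
  assumes nonneg: "\<And>i j. 0 \<le> w i j" and sym: "\<And>i j. w i j = w j i" and "0 < \<epsilon>"
    and "mc_ac_solution w r \<epsilon> u \<beta>"
  obtains u' where "\<And>T i. set_integrable lborel {0..T} (\<lambda>t. u' t $ i)"
    and "\<And>s t i. 0 \<le> s \<Longrightarrow> s \<le> t \<Longrightarrow> u t $ i - u s $ i = integral {s..t} (\<lambda>x. u' x $ i)"
    and "AE t in lborel. 0 < t \<longrightarrow> (\<forall>i. 0 < deg w i \<longrightarrow> \<bar>u' t $ i\<bar> \<le> velocity_bound w r \<epsilon>)"
proof -
  obtain u' where "\<forall>T\<ge>0. set_integrable lborel {0..T} u'"
    and "\<forall>t\<ge>0. u t = u 0 + (LINT x:{0..t}|lborel. u' x)"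
    and equation: "AE t in lborel. t \<ge> 0 \<longrightarrow>
          \<epsilon> *\<^sub>R u' t + \<epsilon> *\<^sub>R graph_laplacian w r (u t) - u t + avg w r (u t) *\<^sub>R (\<chi> i. 1)
            = \<beta> t - avg w r (\<beta> t) *\<^sub>R (\<chi> i. 1) \<and> \<beta> t \<in> obstB (u t)"
    using \<open>mc_ac_solution w r \<epsilon> u \<beta>\<close> unfolding mc_ac_solution_def by blast
  note components = indefinite_integral_components[OF this(1,2)]
  have u01: "0 \<le> u t $ j" "u t $ j \<le> 1" if "0 \<le> t" for t j
    using \<open>mc_ac_solution w r \<epsilon> u \<beta>\<close> that by (auto simp: mc_ac_solution_def V01_def)
  have integrable_on: "(\<lambda>t. u' t $ j) integrable_on {0..b}" for j b
    by (rule set_borel_integral_eq_integral(1)[OF components(1)])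
  have "AE t in lborel. 0 < t \<longrightarrow> u t $ j = 0 \<longrightarrow> u' t $ j = 0" for j
    by (rule AE_derivative_eq_0_at_minimum[OF integrable_on components(2) u01(1)])
  moreover have "AE t in lborel. 0 < t \<longrightarrow> - u t $ j = - 1 \<longrightarrow> - u' t $ j = 0" for j
  proof (rule AE_derivative_eq_0_at_minimum)
    show "(\<lambda>t. - u' t $ j) integrable_on {0..b}" for b
      using integrable_on by (rule integrable_neg)
    show "- u y $ j - - u x $ j = integral {x..y} (\<lambda>t. - u' t $ j)" if "0 \<le> x" "x \<le> y" for x y
      using components(2)[OF that, of j] by simp
    show "- 1 \<le> - u t $ j" if "0 \<le> t" for t
      using u01(2)[OF that] by simp
  qed
  ultimately have "AE t in lborel. \<forall>j\<in>UNIV. (0 < t \<longrightarrow> u t $ j = 0 \<longrightarrow> u' t $ j = 0) \<and>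
                     (0 < t \<longrightarrow> - u t $ j = - 1 \<longrightarrow> - u' t $ j = 0)"
    by (intro AE_finite_allI eventually_conj) auto
  then have at_obstacle: "AE t in lborel. 0 < t \<longrightarrow> (\<forall>j. u t $ j = 0 \<or> u t $ j = 1 \<longrightarrow> u' t $ j = 0)"
    by eventually_elim auto
  have "AE t in lborel. 0 < t \<longrightarrow> (\<forall>i. 0 < deg w i \<longrightarrow> \<bar>u' t $ i\<bar> \<le> velocity_bound w r \<epsilon>)"
    using equation at_obstacle
  proof eventually_elim
    case (elim t)
    show ?case
    proof (intro impI allI)
      fix i assume "0 < t" and "0 < deg w i"
      with \<open>mc_ac_solution w r \<epsilon> u \<beta>\<close> have "u t \<in> V01"
        by (simp add: mc_ac_solution_def)
      from elim \<open>0 < t\<close> show "\<bar>u' t $ i\<bar> \<le> velocity_bound w r \<epsilon>"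
        by (intro abs_velocity_le[OF nonneg sym \<open>0 < \<epsilon>\<close> \<open>u t \<in> V01\<close> _ _ _ \<open>0 < deg w i\<close>]) auto
    qed
  qed
  with components show ?thesis
    by (rule that)
qed

theorem theorem47:
  fixes w :: "'n::finite \<Rightarrow> 'n \<Rightarrow> real" and r \<epsilon> :: real and u0 :: "real^'n"
    and \<tau> :: "nat \<Rightarrow> real" and U :: "nat \<Rightarrow> nat \<Rightarrow> real^'n"
    and uhat \<gamma> :: "real \<Rightarrow> real^'n"
  assumes "weighted_graph w" and "0 \<le> r" and "r \<le> 1" and "0 < \<epsilon>"
    and "u0 \<in> V01" and "u0 \<noteq> 0" and "u0 \<noteq> (\<chi> i. 1)"
    and "\<And>n. 0 < \<tau> n" and "\<And>n. \<tau> n < \<epsilon>" and "decseq \<tau>" and "\<tau> \<longlonglongrightarrow> 0"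
    and "\<And>n. semi_discrete_iterates w r \<epsilon> (\<tau> n) u0 (U n)"
    and "\<And>t. t \<ge> 0 \<Longrightarrow> (\<lambda>n. U n (nat \<lceil>t / \<tau> n\<rceil>)) \<longlonglongrightarrow> uhat t"
    and "mc_ac_solution w r \<epsilon> uhat \<gamma>"
    and "uhat 0 = u0"
  shows "\<exists>L. \<forall>s\<ge>0. \<forall>t\<ge>0. normV w r (uhat t - uhat s) \<le> L * \<bar>t - s\<bar>"
proof -
  have nonneg: "\<And>i j. 0 \<le> w i j" and sym: "\<And>i j. w i j = w j i"
    using \<open>weighted_graph w\<close> by (auto simp: weighted_graph_def)
  define C where "C = velocity_bound w r \<epsilon>"
  obtain u' where integrable: "\<And>T i. set_integrable lborel {0..T} (\<lambda>t. u' t $ i)"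
    and rep: "\<And>s t i. 0 \<le> s \<Longrightarrow> s \<le> t \<Longrightarrow> uhat t $ i - uhat s $ i = integral {s..t} (\<lambda>x. u' x $ i)"
    and bound: "AE t in lborel. 0 < t \<longrightarrow> (\<forall>i. 0 < deg w i \<longrightarrow> \<bar>u' t $ i\<bar> \<le> C)"
    using mc_ac_solution_velocity_bounded[OF nonneg sym \<open>0 < \<epsilon>\<close> \<open>mc_ac_solution w r \<epsilon> uhat \<gamma>\<close>]
    unfolding C_def by blast
  have "\<bar>uhat t $ i - uhat s $ i\<bar> \<le> C * \<bar>t - s\<bar>" if "0 \<le> s" "0 \<le> t" "0 < deg w i" for s t i
  proof (rule abs_diff_le_of_AE_bounded_derivative[where G="\<lambda>x. u' x $ i", OF integrable rep _ that(1,2)])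
    show "AE x in lborel. 0 < x \<longrightarrow> \<bar>u' x $ i\<bar> \<le> C"
      using bound by eventually_elim (use that(3) in auto)
  qed
  then have "normV w r (uhat t - uhat s) \<le> C * sqrt (mass w r (\<chi> i. 1)) * \<bar>t - s\<bar>"
    if "0 \<le> s" "0 \<le> t" for s t
    using normV_le[OF nonneg, where x="uhat t - uhat s" and c="C * \<bar>t - s\<bar>"] that
    by (simp add: mult_ac)
  then show ?thesis
    by blast
qed

end
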